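(* For all integers $k\ge 1$ and $t\ge 1$, $$B_0(k+1,2t+1)+B_1(k,2t)=B_1(k,2t-2k)+p_{de}(2t-k).$$
   Context: For a partition $\pi$, $s(\pi)$ is its smallest part. For $j\ge1$, $\mathrm{Spt}j_{do}(n)$ is the set of partitions $\pi$ of $n$ in which $s(\pi)$ occurs exactly $j$ times and the remaining parts (those larger than $s(\pi)$) are pairwise distinct and each has parity different from that of $s(\pi)$. $B_0(j,n)$ (resp. $B_1(j,n)$) is the number of $\pi\in\mathrm{Spt}j_{do}(n)$ whose number of parts greater than $s(\pi)$ is even (resp. odd); $B_0(j,n)=B_1(j,n)=0$ for $n\le 0$. $p_{de}(n)$ is the number of partitions of $n$ into distinct even parts, with $p_{de}(0)=1$ and $p_{de}(n)=0$ for $n<0$. *)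

theory Defs
  imports Main "HOL-Library.Multiset"
begin

definition partitions :: "nat \<Rightarrow> nat multiset set" where
  "partitions n = {p. (\<forall>x\<in>#p. 0 < x) \<and> sum_mset p = n}"

definition spart :: "nat multiset \<Rightarrow> nat" where
  "spart p = Min_mset p"

definition Sptj_do :: "nat \<Rightarrow> nat \<Rightarrow> nat multiset set" where
  "Sptj_do j n = {p \<in> partitions n. p \<noteq> {#} \<and>
       count p (spart p) = j \<and>
       (\<forall>x\<in>#p. spart p < x \<longrightarrow> count p x = 1 \<and> (even x \<longleftrightarrow> odd (spart p)))}"

definition larger_parts :: "nat multiset \<Rightarrow> nat" where
  "larger_parts p = size (filter_mset (\<lambda>x. spart p < x) p)"

definition B0 :: "nat \<Rightarrow> int \<Rightarrow> nat" where
  "B0 j n = (if n \<le> 0 then 0 else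
     card {p \<in> Sptj_do j (nat n). even (larger_parts p)})"

definition B1 :: "nat \<Rightarrow> int \<Rightarrow> nat" where
  "B1 j n = (if n \<le> 0 then 0 else
     card {p \<in> Sptj_do j (nat n). odd (larger_parts p)})"

definition p_de :: "int \<Rightarrow> nat" where
  "p_de n = (if n < 0 then 0 else
     card {p \<in> partitions (nat n). \<forall>x\<in>#p. even x \<and> count p x = 1})"

end

theory Submission
  imports Defs
begin

text \<open>
  A partition in \<open>Spt j_do(n)\<close> is the same as a pair \<open>(s, D)\<close>: its smallest part \<open>s\<close>
  and the set \<open>D\<close> of its larger parts. For all pairs counted on the left-hand side a parity
  argument shows that \<open>s\<close> is odd, so \<open>D\<close> consists of even numbers. Those with \<open>s = 1\<close> are
  just the sets of distinct even parts summing to \<open>2t - k\<close>, which \<open>p_de(2t - k)\<close> counts.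
  Those with \<open>s \<ge> 3\<close> arise exactly once from the pairs counted by \<open>B1(k, 2t - 2k)\<close> under
  \<open>(s, D) \<mapsto> (s + 2, D - {s + 1})\<close>: the \<open>k\<close> smallest parts grow by 2, and if \<open>s + 1 \<in> D\<close>
  that part becomes a \<open>(k + 1)\<close>-st copy of the new smallest part \<open>s + 2\<close>, giving a pair of
  \<open>B0(k + 1, 2t + 1)\<close>; otherwise the result is a pair of \<open>B1(k, 2t)\<close>.
\<close>

definition spt_pairs :: "nat \<Rightarrow> nat \<Rightarrow> (nat \<times> nat set) set" where
  "spt_pairs j n =
     {(s, D). 0 < s \<and> finite D \<and> (\<forall>x\<in>D. s < x \<and> (even x \<longleftrightarrow> odd s)) \<and> j * s + \<Sum>D = n}"

definition spt_partition :: "nat \<Rightarrow> nat \<times> nat set \<Rightarrow> nat multiset" where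
  "spt_partition j = (\<lambda>(s, D). replicate_mset j s + mset_set D)"

definition spt_pair_of :: "nat multiset \<Rightarrow> nat \<times> nat set" where
  "spt_pair_of p = (spart p, set_mset (filter_mset (\<lambda>x. spart p < x) p))"

lemma spt_pairs_iff:
  "(s, D) \<in> spt_pairs j n \<longleftrightarrow>
     0 < s \<and> finite D \<and> (\<forall>x\<in>D. s < x \<and> (even x \<longleftrightarrow> odd s)) \<and> j * s + \<Sum>D = n"
  by (simp add: spt_pairs_def)

lemma spt_pairs_zero: "j \<ge> 1 \<Longrightarrow> spt_pairs j 0 = {}"
  by (auto simp: spt_pairs_def)

lemma spt_pairs_finite:
  assumes "j \<ge> 1"
  shows "finite (spt_pairs j n)"
proof (rule finite_subset)
  show "spt_pairs j n \<subseteq> {..n} \<times> Pow {..n}"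
  proof clarify
    fix s D assume "(s, D) \<in> spt_pairs j n"
    then have fin: "finite D" and sum: "j * s + \<Sum>D = n"
      by (auto simp: spt_pairs_iff)
    have "s \<le> j * s" using assms by simp
    then have "s \<le> n" using sum by linarith
    moreover have "x \<le> n" if "x \<in> D" for x
      using member_le_sum[of x D "\<lambda>x. x"] that fin sum by simp
    ultimately show "s \<in> {..n} \<and> D \<in> Pow {..n}" by auto
  qed
qed simp

lemma spt_pairs_smallest_odd:
  assumes "(s, D) \<in> spt_pairs j n" and "even n \<longleftrightarrow> odd (card D)"
  shows "odd s"
proof (rule ccontr)
  assume "\<not> odd s"
  with assms(1) have fin: "finite D" and odd_parts: "\<forall>x\<in>D. odd x" and sum: "j * s + \<Sum>D = n"
    by (auto simp: spt_pairs_iff)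
  have "{x \<in> D. odd x} = D" using odd_parts by blast
  then have "even (\<Sum>D) \<longleftrightarrow> even (card D)"
    using even_sum_iff[OF fin, of "\<lambda>x. x"] by simp
  with \<open>\<not> odd s\<close> sum assms(2) show False by auto
qed

lemma set_mset_spt_partition:
  "j \<ge> 1 \<Longrightarrow> finite D \<Longrightarrow> set_mset (spt_partition j (s, D)) = insert s D"
  by (auto simp: spt_partition_def)

lemma spart_spt_partition:
  assumes "j \<ge> 1" "finite D" "\<forall>x\<in>D. s < x"
  shows "spart (spt_partition j (s, D)) = s"
  unfolding spart_def set_mset_spt_partition[OF assms(1,2)]
  using assms(2,3) by (intro Min_eqI) auto

lemma larger_parts_spt_partition:
  assumes "j \<ge> 1" "finite D" "\<forall>x\<in>D. s < x"
  shows "larger_parts (spt_partition j (s, D)) = card D"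
proof -
  have "{x \<in> D. s < x} = D" using assms(3) by blast
  then show ?thesis
    unfolding larger_parts_def spart_spt_partition[OF assms]
    using assms(2) by (simp add: spt_partition_def)
qed

lemma spt_partition_spt_pair_of:
  assumes "p \<in> Sptj_do j n"
  shows "spt_partition j (spt_pair_of p) = p"
proof (rule multiset_eqI)
  fix x
  from assms have "p \<noteq> {#}" and count_spart: "count p (spart p) = j"
    and count_larger: "\<forall>x\<in>#p. spart p < x \<longrightarrow> count p x = 1"
    by (auto simp: Sptj_do_def)
  then have "spart p < x" if "x \<in># p" "x \<noteq> spart p" for x
    using that by (simp add: spart_def order.not_eq_order_implies_strict)
  moreover have "finite {y. y \<in># p \<and> spart p < y}"
    by (rule finite_subset[of _ "set_mset p"]) auto
  ultimately show "count (spt_partition j (spt_pair_of p)) x = count p x"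
    using count_spart count_larger
    by (cases "x = spart p"; cases "x \<in># p")
      (auto simp: spt_pair_of_def spt_partition_def count_eq_zero_iff count_mset_set')
qed

lemma spt_pair_of_spt_partition:
  assumes "j \<ge> 1" "finite D" "\<forall>x\<in>D. s < x"
  shows "spt_pair_of (spt_partition j (s, D)) = (s, D)"
proof -
  have "{x \<in> D. s < x} = D" using assms(3) by blast
  then show ?thesis
    unfolding spt_pair_of_def spart_spt_partition[OF assms]
    using assms(2) by (auto simp: spt_partition_def)
qed

lemma bij_betw_spt_partition:
  assumes "j \<ge> 1"
  shows "bij_betw (spt_partition j) (spt_pairs j n) (Sptj_do j n)"
proof (rule bij_betw_byWitness[where f' = spt_pair_of])
  show "\<forall>a\<in>spt_pairs j n. spt_pair_of (spt_partition j a) = a"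
    using spt_pair_of_spt_partition[OF assms] by (auto simp: spt_pairs_iff)
  show "\<forall>p\<in>Sptj_do j n. spt_partition j (spt_pair_of p) = p"
    using spt_partition_spt_pair_of by blast
  show "spt_partition j ` spt_pairs j n \<subseteq> Sptj_do j n"
  proof clarify
    fix s D assume "(s, D) \<in> spt_pairs j n"
    then have s: "0 < s" and fin: "finite D"
      and parts: "\<forall>x\<in>D. s < x \<and> (even x \<longleftrightarrow> odd s)" and sum: "j * s + \<Sum>D = n"
      by (auto simp: spt_pairs_iff)
    then have larger: "\<forall>x\<in>D. s < x" by blast
    let ?p = "spt_partition j (s, D)"
    have "set_mset ?p = insert s D" by (rule set_mset_spt_partition[OF assms fin])
    moreover have "sum_mset ?p = n"
      using sum by (simp add: spt_partition_def sum_unfold_sum_mset)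
    moreover have "count ?p s = j" and "\<forall>x\<in>D. count ?p x = 1"
      using fin larger by (auto simp: spt_partition_def)
    ultimately show "?p \<in> Sptj_do j n"
      using s parts assms spart_spt_partition[OF assms fin larger]
      by (auto simp: Sptj_do_def partitions_def)
  qed
  show "spt_pair_of ` Sptj_do j n \<subseteq> spt_pairs j n"
  proof (rule image_subsetI)
    fix p assume p: "p \<in> Sptj_do j n"
    let ?s = "spart p" and ?D = "set_mset (filter_mset (\<lambda>x. spart p < x) p)"
    from p have "p \<noteq> {#}" and pos: "\<forall>x\<in>#p. 0 < x" and sum: "sum_mset p = n"
      and par: "\<forall>x\<in>#p. ?s < x \<longrightarrow> (even x \<longleftrightarrow> odd ?s)"
      by (auto simp: Sptj_do_def partitions_def)
    then have "0 < ?s" by (simp add: spart_def)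
    moreover have "sum_mset (spt_partition j (spt_pair_of p)) = n"
      using sum spt_partition_spt_pair_of[OF p] by simp
    then have "j * ?s + \<Sum>?D = n"
      by (simp add: spt_pair_of_def spt_partition_def sum_unfold_sum_mset)
    ultimately show "spt_pair_of p \<in> spt_pairs j n"
      using par by (auto simp: spt_pair_of_def spt_pairs_iff)
  qed
qed

lemma card_Sptj_do_larger_parts:
  assumes "j \<ge> 1"
  shows "card {p \<in> Sptj_do j n. P (larger_parts p)} = card {(s, D) \<in> spt_pairs j n. P (card D)}"
proof -
  let ?A = "{(s, D) \<in> spt_pairs j n. P (card D)}"
  have bij: "bij_betw (spt_partition j) (spt_pairs j n) (Sptj_do j n)"
    using bij_betw_spt_partition[OF assms] .
  have larger: "larger_parts (spt_partition j a) = card (snd a)" if "a \<in> spt_pairs j n" for a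
    using that larger_parts_spt_partition[OF assms] by (cases a) (auto simp: spt_pairs_iff)
  have "{p \<in> Sptj_do j n. P (larger_parts p)} = spt_partition j ` ?A"
  proof
    show "spt_partition j ` ?A \<subseteq> {p \<in> Sptj_do j n. P (larger_parts p)}"
      using bij_betw_imp_surj_on[OF bij] larger by auto
    show "{p \<in> Sptj_do j n. P (larger_parts p)} \<subseteq> spt_partition j ` ?A"
    proof clarify
      fix p assume "p \<in> Sptj_do j n" "P (larger_parts p)"
      then obtain a where "a \<in> spt_pairs j n" "p = spt_partition j a"
        using bij_betw_imp_surj_on[OF bij] by blast
      then show "p \<in> spt_partition j ` ?A"
        using \<open>P (larger_parts p)\<close> larger by (intro image_eqI) auto
    qed
  qed
  moreover have "inj_on (spt_partition j) ?A"
    using bij_betw_imp_inj_on[OF bij] by (rule inj_on_subset) auto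
  ultimately show ?thesis by (simp add: card_image)
qed

lemma B0_eq_card:
  assumes "j \<ge> 1"
  shows "B0 j n = card {(s, D) \<in> spt_pairs j (nat n). even (card D)}"
  by (simp add: B0_def card_Sptj_do_larger_parts[OF assms, where P = even] spt_pairs_zero[OF assms])

lemma B1_eq_card:
  assumes "j \<ge> 1"
  shows "B1 j n = card {(s, D) \<in> spt_pairs j (nat n). odd (card D)}"
  by (simp add: B1_def card_Sptj_do_larger_parts[OF assms, where P = odd] spt_pairs_zero[OF assms])

lemma mset_set_set_mset_if_count_one:
  "\<forall>x\<in>#p. count p x = 1 \<Longrightarrow> mset_set (set_mset p) = p"
  by (rule multiset_eqI) (auto simp: count_mset_set' count_eq_zero_iff)

text \<open>Sets of distinct even parts with sum \<open>n - j\<close>, phrased without truncated subtraction.\<close>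

definition even_part_sets :: "nat \<Rightarrow> nat \<Rightarrow> nat set set" where
  "even_part_sets j n = {D. finite D \<and> (\<forall>x\<in>D. 0 < x \<and> even x) \<and> j + \<Sum>D = n}"

lemma p_de_eq_card: "p_de (int n - int j) = card (even_part_sets j n)"
proof (cases "j \<le> n")
  case False
  then show ?thesis by (auto simp: p_de_def even_part_sets_def)
next
  case True
  let ?A = "{p \<in> partitions (n - j). \<forall>x\<in>#p. even x \<and> count p x = 1}"
  let ?W = "even_part_sets j n"
  have "bij_betw set_mset ?A ?W"
  proof (rule bij_betw_byWitness[where f' = mset_set])
    show "\<forall>p\<in>?A. mset_set (set_mset p) = p"
      by (simp add: mset_set_set_mset_if_count_one)
    show "\<forall>D\<in>?W. set_mset (mset_set D) = D" by (simp add: even_part_sets_def)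
    show "set_mset ` ?A \<subseteq> ?W"
    proof (rule image_subsetI)
      fix p assume p: "p \<in> ?A"
      have "\<Sum>(set_mset p) = sum_mset (mset_set (set_mset p))"
        by (simp add: sum_unfold_sum_mset)
      also have "\<dots> = n - j"
        using p by (simp add: mset_set_set_mset_if_count_one partitions_def)
      finally have "\<Sum>(set_mset p) = n - j" .
      then show "set_mset p \<in> ?W" using p True by (auto simp: partitions_def even_part_sets_def)
    qed
    show "mset_set ` ?W \<subseteq> ?A"
      using True by (auto simp: partitions_def even_part_sets_def sum_unfold_sum_mset)
  qed
  moreover have "\<not> int n - int j < 0" "nat (int n - int j) = n - j" using True by simp_all
  ultimately show ?thesis
    by (simp add: p_de_def bij_betw_same_card)
qed

lemma even_less_shift_iff:
  fixes s x :: nat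
  assumes "odd s" "even x" "x \<noteq> s + 1"
  shows "s + 2 < x \<longleftrightarrow> s < x"
  using assms by presburger

lemma spt_pairs_shift_absent:
  assumes "odd s" "s + 1 \<notin> D"
  shows "(s + 2, D) \<in> spt_pairs j (n + 2 * j) \<longleftrightarrow> (s, D) \<in> spt_pairs j n"
proof -
  have "(\<forall>x\<in>D. s + 2 < x \<and> even x) \<longleftrightarrow> (\<forall>x\<in>D. s < x \<and> even x)"
    using assms even_less_shift_iff by blast
  with assms(1) show ?thesis by (auto simp: spt_pairs_iff algebra_simps odd_pos)
qed

lemma spt_pairs_shift_present:
  assumes "odd s" "s + 1 \<in> D"
  shows "(s + 2, D - {s + 1}) \<in> spt_pairs (j + 1) (n + 2 * j + 1) \<longleftrightarrow>
         (s, D) \<in> spt_pairs j n"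
proof -
  have "(\<forall>x\<in>D - {s + 1}. s + 2 < x \<and> even x) \<longleftrightarrow> (\<forall>x\<in>D. s < x \<and> even x)"
    using assms even_less_shift_iff by auto
  moreover have "\<Sum>D = (s + 1) + \<Sum>(D - {s + 1})" if "finite D"
    using sum.remove[OF that assms(2), of "\<lambda>x. x"] .
  ultimately show ?thesis
    using assms(1) by (auto simp: spt_pairs_iff algebra_simps odd_pos)
qed

definition left_pairs :: "nat \<Rightarrow> nat \<Rightarrow> (nat \<times> nat set) set" where
  "left_pairs j T = {(s, D) \<in> spt_pairs (j + 1) (2 * T + 1). even (card D)}
                  \<union> {(s, D) \<in> spt_pairs j (2 * T). odd (card D)}"

lemma left_pairs_smallest_odd:
  assumes "(s, D) \<in> left_pairs j T"
  shows "odd s"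
proof -
  from assms consider "(s, D) \<in> spt_pairs (j + 1) (2 * T + 1)" "even (card D)"
    | "(s, D) \<in> spt_pairs j (2 * T)" "odd (card D)"
    by (auto simp: left_pairs_def)
  then show ?thesis
    by cases (erule spt_pairs_smallest_odd; simp)+
qed

definition shift_pair :: "nat \<times> nat set \<Rightarrow> nat \<times> nat set" where
  "shift_pair = (\<lambda>(s, D). (s + 2, D - {s + 1}))"

definition unshift_pair :: "nat \<times> nat set \<Rightarrow> nat \<times> nat set" where
  "unshift_pair = (\<lambda>(s, D). (s - 2, if even (card D) then insert (s - 1) D else D))"

lemma unshift_shift_pair:
  "finite D \<Longrightarrow> odd (card D) \<Longrightarrow> unshift_pair (shift_pair (s, D)) = (s, D)"
  by (cases "s + 1 \<in> D")
    (auto simp: shift_pair_def unshift_pair_def card_Diff_singleton insert_absorb)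

lemma shift_unshift_pair:
  assumes "2 \<le> s" "s - 1 \<notin> D"
  shows "shift_pair (unshift_pair (s, D)) = (s, D)"
proof -
  have "s - 2 + 1 = s - 1" "s - 2 + 2 = s" using assms(1) by arith+
  then show ?thesis using assms(2) by (simp add: shift_pair_def unshift_pair_def)
qed

lemma shift_pair_mem_left_pairs:
  assumes "j \<ge> 1" "(s, D) \<in> spt_pairs j (2 * T - 2 * j)" "odd (card D)"
  shows "shift_pair (s, D) \<in> left_pairs j T"
proof -
  from assms(2,3) have "odd s" by (intro spt_pairs_smallest_odd) auto
  from assms have "0 < j * s" "finite D" and sum: "j * s + \<Sum>D = 2 * T - 2 * j"
    by (auto simp: spt_pairs_iff)
  then have T: "2 * T = (2 * T - 2 * j) + 2 * j" by linarith
  show ?thesis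
  proof (cases "s + 1 \<in> D")
    case True
    then have "(s + 2, D - {s + 1}) \<in> spt_pairs (j + 1) (2 * T + 1)"
      using spt_pairs_shift_present[OF \<open>odd s\<close> True] assms(2) T by (metis add.assoc)
    with True assms(3) \<open>finite D\<close> show ?thesis
      by (auto simp: shift_pair_def left_pairs_def card_Diff_singleton)
  next
    case False
    then have "(s + 2, D) \<in> spt_pairs j (2 * T)"
      using spt_pairs_shift_absent[OF \<open>odd s\<close> False] assms(2) T by metis
    with False assms(3) show ?thesis by (auto simp: shift_pair_def left_pairs_def)
  qed
qed

lemma unshift_pair_mem_spt_pairs:
  assumes "(s, D) \<in> left_pairs j T" "s \<noteq> 1"
  shows "unshift_pair (s, D) \<in> {(s, D) \<in> spt_pairs j (2 * T - 2 * j). odd (card D)}"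
proof -
  have "odd s" using assms(1) by (rule left_pairs_smallest_odd)
  with assms(2) have "s = (s - 2) + 2" "odd (s - 2)" by presburger+
  then obtain u where u: "s = u + 2" "odd u" by blast
  from assms(1) have "finite D" "u + 1 \<notin> D" by (auto simp: left_pairs_def spt_pairs_iff u)
  show ?thesis
  proof (cases "even (card D)")
    case True
    with assms(1)
    have X: "(u + 2, insert (u + 1) D - {u + 1}) \<in> spt_pairs (j + 1) (2 * T + 1)"
      using \<open>u + 1 \<notin> D\<close> by (auto simp: left_pairs_def u)
    then have "j \<le> T" by (auto simp: spt_pairs_iff)
    then have "2 * T + 1 = (2 * T - 2 * j) + 2 * j + 1" by simp
    with X have "(u, insert (u + 1) D) \<in> spt_pairs j (2 * T - 2 * j)"
      using spt_pairs_shift_present[OF \<open>odd u\<close>] by (metis insertI1)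
    with True \<open>finite D\<close> \<open>u + 1 \<notin> D\<close> show ?thesis by (simp add: unshift_pair_def u)
  next
    case False
    with assms(1) have Y: "(u + 2, D) \<in> spt_pairs j (2 * T)" by (auto simp: left_pairs_def u)
    then have "j \<le> T" by (auto simp: spt_pairs_iff)
    then have "2 * T = (2 * T - 2 * j) + 2 * j" by simp
    with Y have "(u, D) \<in> spt_pairs j (2 * T - 2 * j)"
      using spt_pairs_shift_absent[OF \<open>odd u\<close> \<open>u + 1 \<notin> D\<close>] by metis
    with False show ?thesis by (simp add: unshift_pair_def u)
  qed
qed

lemma bij_betw_shift_pair:
  assumes "j \<ge> 1"
  shows "bij_betw shift_pair {(s, D) \<in> spt_pairs j (2 * T - 2 * j). odd (card D)}
           {(s, D) \<in> left_pairs j T. s \<noteq> 1}"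
proof (rule bij_betw_byWitness[where f' = unshift_pair])
  show "\<forall>a\<in>{(s, D) \<in> spt_pairs j (2 * T - 2 * j). odd (card D)}.
          unshift_pair (shift_pair a) = a"
    by (auto simp: spt_pairs_iff unshift_shift_pair)
  show "\<forall>b\<in>{(s, D) \<in> left_pairs j T. s \<noteq> 1}. shift_pair (unshift_pair b) = b"
  proof clarify
    fix s D assume "(s, D) \<in> left_pairs j T" "s \<noteq> 1"
    moreover from this have "odd s" by (intro left_pairs_smallest_odd)
    ultimately have "2 \<le> s" "s - 1 \<notin> D"
      by (presburger, auto simp: left_pairs_def spt_pairs_iff)
    then show "shift_pair (unshift_pair (s, D)) = (s, D)" by (rule shift_unshift_pair)
  qed
  show "shift_pair ` {(s, D) \<in> spt_pairs j (2 * T - 2 * j). odd (card D)}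
          \<subseteq> {(s, D) \<in> left_pairs j T. s \<noteq> 1}"
    using shift_pair_mem_left_pairs[OF assms] by (auto simp: shift_pair_def)
  show "unshift_pair ` {(s, D) \<in> left_pairs j T. s \<noteq> 1}
          \<subseteq> {(s, D) \<in> spt_pairs j (2 * T - 2 * j). odd (card D)}"
  proof (rule image_subsetI)
    fix b assume "b \<in> {(s, D) \<in> left_pairs j T. s \<noteq> 1}"
    then obtain s D where "b = (s, D)" "(s, D) \<in> left_pairs j T" "s \<noteq> 1" by blast
    then show "unshift_pair b \<in> {(s, D) \<in> spt_pairs j (2 * T - 2 * j). odd (card D)}"
      using unshift_pair_mem_spt_pairs by simp
  qed
qed

lemma spt_pairs_smallest_one_iff: "(1, D) \<in> spt_pairs j n \<longleftrightarrow> D \<in> even_part_sets j n"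
proof -
  have "1 < x \<and> even x \<longleftrightarrow> 0 < x \<and> even x" for x :: nat by presburger
  then show ?thesis by (simp add: spt_pairs_iff even_part_sets_def)
qed

lemma left_pairs_smallest_one:
  "{(s, D) \<in> left_pairs j T. s = 1} = Pair 1 ` even_part_sets j (2 * T)"
proof -
  have "(1, D) \<in> left_pairs j T \<longleftrightarrow> D \<in> even_part_sets j (2 * T)" for D
    using spt_pairs_smallest_one_iff[of D "j + 1" "2 * T + 1"]
      spt_pairs_smallest_one_iff[of D j "2 * T"]
    by (cases "even (card D)") (auto simp: left_pairs_def even_part_sets_def)
  then show ?thesis by blast
qed

lemma card_left_pairs:
  assumes "j \<ge> 1"
  shows "card (left_pairs j T) = card {(s, D) \<in> spt_pairs (j + 1) (2 * T + 1). even (card D)}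
                               + card {(s, D) \<in> spt_pairs j (2 * T). odd (card D)}"
  unfolding left_pairs_def
  using assms by (intro card_Un_disjoint) (auto intro: finite_subset[OF _ spt_pairs_finite])

lemma card_left_pairs_split:
  assumes "j \<ge> 1"
  shows "card (left_pairs j T) = card {(s, D) \<in> spt_pairs j (2 * T - 2 * j). odd (card D)}
           + card (even_part_sets j (2 * T))"
proof -
  have "finite (left_pairs j T)"
    using assms by (auto simp: left_pairs_def intro: finite_subset[OF _ spt_pairs_finite])
  then have "card (left_pairs j T)
      = card {(s, D) \<in> left_pairs j T. s \<noteq> 1} + card {(s, D) \<in> left_pairs j T. s = 1}"
    by (subst card_Un_disjoint[symmetric])
      (auto intro: arg_cong[where f = card] finite_subset[OF _ \<open>finite (left_pairs j T)\<close>])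
  also have "card {(s, D) \<in> left_pairs j T. s \<noteq> 1}
      = card {(s, D) \<in> spt_pairs j (2 * T - 2 * j). odd (card D)}"
    using bij_betw_same_card[OF bij_betw_shift_pair[OF assms]] by simp
  also have "card {(s, D) \<in> left_pairs j T. s = 1} = card (even_part_sets j (2 * T))"
    unfolding left_pairs_smallest_one by (simp add: card_image inj_on_def)
  finally show ?thesis .
qed

theorem lemma1:
  fixes k t :: int
  assumes "k \<ge> 1" and "t \<ge> 1"
  shows "int (B0 (nat (k + 1)) (2*t + 1)) + int (B1 (nat k) (2*t))
       = int (B1 (nat k) (2*t - 2*k)) + int (p_de (2*t - k))"
proof -
  define K T where "K = nat k" and "T = nat t"
  then have K: "K \<ge> 1" and k: "k = int K" and t: "t = int T" using assms by auto
  have "nat k = K" "nat (k + 1) = K + 1" "nat (2*t + 1) = 2 * T + 1" "nat (2*t) = 2 * T"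
    "nat (2*t - 2*k) = 2 * T - 2 * K" "2*t - k = int (2 * T) - int K"
    using k t by auto
  then have "B0 (nat (k + 1)) (2*t + 1) + B1 (nat k) (2*t) = card (left_pairs K T)"
    and "B1 (nat k) (2*t - 2*k) + p_de (2*t - k) = card (left_pairs K T)"
    using B0_eq_card[of "K + 1" "2*t + 1"] B1_eq_card[OF K, of "2*t"]
      B1_eq_card[OF K, of "2*t - 2*k"] p_de_eq_card[of "2 * T" K]
      card_left_pairs[OF K, of T] card_left_pairs_split[OF K, of T]
    by simp_all
  then show ?thesis by (metis of_nat_add)
qed

end
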